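(* The abelian category $\mathcal R$ of rational $\mathfrak{sl}(2)$-modules decomposes as the $\mathrm{Hom}$-orthogonal direct sum of the abelian subcategories of generalized rational Casimir modules: $$\mathcal R=\bigoplus_{\mu\in\mathbb{C}}\mathcal{RC}^\bullet_\mu .$$ That is, every rational module $W$ is a finite direct sum, as $\mathfrak{sl}(2)$-modules, $W=W_{\mu_1}\oplus\cdots\oplus W_{\mu_r}$ with pairwise distinct $\mu_i\in\mathbb{C}$ and $W_{\mu_i}\in\mathcal{RC}^\bullet_{\mu_i}$, and $\mathrm{Hom}_{\mathfrak{sl}(2)}(A,B)=0$ whenever $A\in\mathcal{RC}^\bullet_\mu$, $B\in\mathcal{RC}^\bullet_\nu$ with $\mu\neq\nu$. This decomposition is compatible with the coproduct decomposition $\mathcal{RC}=\coprod_{\mu\in\mathbb{C}}\mathcal{RC}_\mu$ (i.e. $\mathcal{RC}_\mu\subseteq\mathcal{RC}^\bullet_\mu$ for each $\mu$).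
   Context: $\mathfrak{sl}(2)$ has basis $L_{-1}=f$, $L_0=-\tfrac12 h$, $L_1=-e$ for a Chevalley basis $e,f,h$ ($[e,f]=h$, $[h,e]=2e$, $[h,f]=-2f$). Every $\mathfrak{sl}(2)$-module $(V,\rho)$ is a $\mathbb{C}[z]$-module via $z\cdot v=\rho(L_0)v$, and has Casimir operator $C_\rho=\rho(L_0)(\rho(L_0)-1)-\rho(L_{-1})\rho(L_1)$. A rational module is an $\mathfrak{sl}(2)$-module whose $\mathbb{C}[z]$-module structure is that of a finite-dimensional $\mathbb{C}(z)$-vector space; $\mathcal R$ is the full subcategory of $\mathfrak{sl}(2)$-modules formed by rational modules. A module is Casimir of level $\mu$ if $C_\rho=\mu\,\mathrm{Id}$, and generalized Casimir of level $\mu$ if $(C_\rho-\mu)^n=0$ for some $n\ge1$. $\mathcal{RC}_\mu$ (resp. $\mathcal{RC}^\bullet_\mu$) is the full subcategory of $\mathcal R$ of Casimir (resp. generalized Casimir) rational modules of level $\mu$, and $\mathcal{RC}$ is the full subcategory of all rational Casimir modules (of any level). *)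

theory Defs
  imports Main "HOL-Computational_Algebra.Polynomial"
begin

text \<open>An sl(2)-module is given by a complex vector space (the ambient type 'v with a
  scalar multiplication s), a carrier subspace V, and the three operators
  Lm = rho(L_{-1}), Lz = rho(L_0), Lp = rho(L_1), which are linear on V, preserve V,
  and satisfy the Witt relations [L_m, L_n] = (m - n) L_{m+n}, i.e.
  [L_0,L_{-1}] = L_{-1}, [L_1,L_{-1}] = 2 L_0, [L_0,L_1] = - L_1
  (equivalent to the Chevalley relations via L_{-1}=f, L_0=-h/2, L_1=-e).\<close>

definition op_on :: "(complex \<Rightarrow> 'v::ab_group_add \<Rightarrow> 'v) \<Rightarrow> 'v set \<Rightarrow> ('v \<Rightarrow> 'v) \<Rightarrow> bool" where
  "op_on s V T \<longleftrightarrow> (\<forall>x\<in>V. T x \<in> V) \<and> (\<forall>x\<in>V. \<forall>y\<in>V. T (x + y) = T x + T y)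
     \<and> (\<forall>c. \<forall>x\<in>V. T (s c x) = s c (T x))"

definition sl2_module ::
  "(complex \<Rightarrow> 'v::ab_group_add \<Rightarrow> 'v) \<Rightarrow> 'v set \<Rightarrow> ('v \<Rightarrow> 'v) \<Rightarrow> ('v \<Rightarrow> 'v) \<Rightarrow> ('v \<Rightarrow> 'v) \<Rightarrow> bool" where
  "sl2_module s V Lm Lz Lp \<longleftrightarrow>
     Vector_Spaces.vector_space s \<and> module.subspace s V \<and>
     op_on s V Lm \<and> op_on s V Lz \<and> op_on s V Lp \<and>
     (\<forall>v\<in>V. Lz (Lm v) - Lm (Lz v) = Lm v) \<and>
     (\<forall>v\<in>V. Lp (Lm v) - Lm (Lp v) = s 2 (Lz v)) \<and>
     (\<forall>v\<in>V. Lz (Lp v) - Lp (Lz v) = - Lp v)"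

definition poly_op :: "(complex \<Rightarrow> 'v::ab_group_add \<Rightarrow> 'v) \<Rightarrow> ('v \<Rightarrow> 'v) \<Rightarrow> complex poly \<Rightarrow> 'v \<Rightarrow> 'v" where
  "poly_op s Lz p v = (\<Sum>i\<le>degree p. s (coeff p i) ((Lz ^^ i) v))"

text \<open>Rational module: the C[z]-module structure (z acting by rho(L_0)) is that of a
  finite-dimensional C(z)-vector space, i.e. every nonzero polynomial acts bijectively
  on V (so the action extends to C(z)) and V is spanned over C(z) by a finite set.\<close>
definition rational_module ::
  "(complex \<Rightarrow> 'v::ab_group_add \<Rightarrow> 'v) \<Rightarrow> 'v set \<Rightarrow> ('v \<Rightarrow> 'v) \<Rightarrow> ('v \<Rightarrow> 'v) \<Rightarrow> ('v \<Rightarrow> 'v) \<Rightarrow> bool" where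
  "rational_module s V Lm Lz Lp \<longleftrightarrow> sl2_module s V Lm Lz Lp \<and>
     (\<forall>p. p \<noteq> 0 \<longrightarrow> bij_betw (poly_op s Lz p) V V) \<and>
     (\<exists>S. finite S \<and> S \<subseteq> V \<and>
        (\<forall>v\<in>V. \<exists>q c. q \<noteq> 0 \<and> poly_op s Lz q v = (\<Sum>u\<in>S. poly_op s Lz (c u) u)))"

definition casimir :: "('v::ab_group_add \<Rightarrow> 'v) \<Rightarrow> ('v \<Rightarrow> 'v) \<Rightarrow> ('v \<Rightarrow> 'v) \<Rightarrow> 'v \<Rightarrow> 'v" where
  "casimir Lm Lz Lp v = Lz (Lz v) - Lz v - Lm (Lp v)"

definition casimir_level ::
  "(complex \<Rightarrow> 'v::ab_group_add \<Rightarrow> 'v) \<Rightarrow> 'v set \<Rightarrow> ('v \<Rightarrow> 'v) \<Rightarrow> ('v \<Rightarrow> 'v) \<Rightarrow> ('v \<Rightarrow> 'v) \<Rightarrow> complex \<Rightarrow> bool" where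
  "casimir_level s V Lm Lz Lp \<mu> \<longleftrightarrow> (\<forall>v\<in>V. casimir Lm Lz Lp v = s \<mu> v)"

definition gen_casimir_level ::
  "(complex \<Rightarrow> 'v::ab_group_add \<Rightarrow> 'v) \<Rightarrow> 'v set \<Rightarrow> ('v \<Rightarrow> 'v) \<Rightarrow> ('v \<Rightarrow> 'v) \<Rightarrow> ('v \<Rightarrow> 'v) \<Rightarrow> complex \<Rightarrow> bool" where
  "gen_casimir_level s V Lm Lz Lp \<mu> \<longleftrightarrow>
     (\<exists>n\<ge>1. \<forall>v\<in>V. ((\<lambda>w. casimir Lm Lz Lp w - s \<mu> w) ^^ n) v = 0)"

definition in_RC :: "(complex \<Rightarrow> 'v::ab_group_add \<Rightarrow> 'v) \<Rightarrow> 'v set \<Rightarrow> ('v \<Rightarrow> 'v) \<Rightarrow> ('v \<Rightarrow> 'v) \<Rightarrow> ('v \<Rightarrow> 'v) \<Rightarrow> complex \<Rightarrow> bool" where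
  "in_RC s V Lm Lz Lp \<mu> \<longleftrightarrow> rational_module s V Lm Lz Lp \<and> casimir_level s V Lm Lz Lp \<mu>"

definition in_RC_gen :: "(complex \<Rightarrow> 'v::ab_group_add \<Rightarrow> 'v) \<Rightarrow> 'v set \<Rightarrow> ('v \<Rightarrow> 'v) \<Rightarrow> ('v \<Rightarrow> 'v) \<Rightarrow> ('v \<Rightarrow> 'v) \<Rightarrow> complex \<Rightarrow> bool" where
  "in_RC_gen s V Lm Lz Lp \<mu> \<longleftrightarrow> rational_module s V Lm Lz Lp \<and> gen_casimir_level s V Lm Lz Lp \<mu>"

definition sl2_hom ::
  "(complex \<Rightarrow> 'a::ab_group_add \<Rightarrow> 'a) \<Rightarrow> 'a set \<Rightarrow> ('a \<Rightarrow> 'a) \<Rightarrow> ('a \<Rightarrow> 'a) \<Rightarrow> ('a \<Rightarrow> 'a) \<Rightarrow>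
   (complex \<Rightarrow> 'b::ab_group_add \<Rightarrow> 'b) \<Rightarrow> 'b set \<Rightarrow> ('b \<Rightarrow> 'b) \<Rightarrow> ('b \<Rightarrow> 'b) \<Rightarrow> ('b \<Rightarrow> 'b) \<Rightarrow>
   ('a \<Rightarrow> 'b) \<Rightarrow> bool" where
  "sl2_hom s V Lm Lz Lp t W Km Kz Kp f \<longleftrightarrow>
     (\<forall>x\<in>V. f x \<in> W) \<and> (\<forall>x\<in>V. \<forall>y\<in>V. f (x + y) = f x + f y) \<and>
     (\<forall>c. \<forall>x\<in>V. f (s c x) = t c (f x)) \<and>
     (\<forall>x\<in>V. f (Lm x) = Km (f x)) \<and> (\<forall>x\<in>V. f (Lz x) = Kz (f x)) \<and>
     (\<forall>x\<in>V. f (Lp x) = Kp (f x))"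

end

theory Submission
  imports
    Defs
    "HOL-Computational_Algebra.Computational_Algebra"
    "HOL-Computational_Algebra.Field_as_Ring"
    "HOL-Library.Function_Algebras"
begin

(*
  The Casimir operator C commutes with sl(2), so everything reduces to the C[z]-linear operator
  C on V, which is finite dimensional over C(z). Hence C satisfies a nonzero relation m(z, C) = 0
  with coefficients in C[z]; take m of least degree in C. As L_{-1} shifts z to z - 1, commutes
  with C and L_{-1} L_1 = z^2 - z - C, the relations m(z - 1, C) (z^2 - z - C) = 0 and
  m(z + 1, C) (z^2 + z - C) = 0 hold as well, so over C(z) the polynomials m(z, C) and
  m(z - 1, C) divide each other up to a linear factor and are proportional. Only constants are
  invariant under z -> z - 1, so m = l(z) M(C), and as l(z) acts injectively, M(C) = 0 for a
  nonzero M in C[C]. Splitting M into powers of C - mu and using Bezout identities decomposes V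
  into generalized eigenspaces of C, with projections that are polynomials in C; they commute
  with sl(2) and with C(z), so every summand is again rational. An sl(2)-map intertwines the
  Casimir operators, so its image is killed by coprime powers of C - mu and C - nu.
*)

locale module_endo =
  fixes act :: "'c::comm_ring_1 \<Rightarrow> 'v::ab_group_add \<Rightarrow> 'v" and V :: "'v set" and T :: "'v \<Rightarrow> 'v"
  assumes zero_in: "0 \<in> V" and add_in: "x \<in> V \<Longrightarrow> y \<in> V \<Longrightarrow> x + y \<in> V"
    and act_in: "x \<in> V \<Longrightarrow> act a x \<in> V"
    and act_add_left: "x \<in> V \<Longrightarrow> act (a + b) x = act a x + act b x"
    and act_add_right: "x \<in> V \<Longrightarrow> y \<in> V \<Longrightarrow> act a (x + y) = act a x + act a y"
    and act_mult: "x \<in> V \<Longrightarrow> act (a * b) x = act a (act b x)"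
    and act_one: "x \<in> V \<Longrightarrow> act 1 x = x"
    and T_in: "x \<in> V \<Longrightarrow> T x \<in> V"
    and T_add: "x \<in> V \<Longrightarrow> y \<in> V \<Longrightarrow> T (x + y) = T x + T y"
    and T_act: "x \<in> V \<Longrightarrow> T (act a x) = act a (T x)"
begin

definition peval :: "'c poly \<Rightarrow> 'v \<Rightarrow> 'v" where
  "peval P v = (\<Sum>k\<le>degree P. act (coeff P k) ((T ^^ k) v))"

definition kernel :: "'c poly \<Rightarrow> 'v set" where
  "kernel P = {v \<in> V. peval P v = 0}"

lemma act_zero_left: "x \<in> V \<Longrightarrow> act 0 x = 0"
  using act_add_left[of x 0 0] by simp

lemma act_zero_right: "act a 0 = 0"
  using act_add_right[OF zero_in zero_in, of a] by simp

lemma sum_in: "(\<And>i. i \<in> I \<Longrightarrow> f i \<in> V) \<Longrightarrow> sum f I \<in> V"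
  by (induction I rule: infinite_finite_induct) (auto simp: zero_in add_in)

lemma funpow_T_in: "x \<in> V \<Longrightarrow> (T ^^ k) x \<in> V"
  by (induction k) (auto simp: T_in)

lemma T_zero: "T 0 = 0"
  using T_add[OF zero_in zero_in] by simp

lemma T_sum: "(\<And>i. i \<in> I \<Longrightarrow> f i \<in> V) \<Longrightarrow> T (sum f I) = (\<Sum>i\<in>I. T (f i))"
  by (induction I rule: infinite_finite_induct) (auto simp: T_zero T_add sum_in)

lemma peval_conv_sum:
  "degree P \<le> N \<Longrightarrow> x \<in> V \<Longrightarrow> peval P x = (\<Sum>k\<le>N. act (coeff P k) ((T ^^ k) x))"
  unfolding peval_def
  by (rule sum.mono_neutral_left) (auto simp: coeff_eq_0 act_zero_left funpow_T_in)

lemma peval_in: "x \<in> V \<Longrightarrow> peval P x \<in> V"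
  unfolding peval_def by (auto intro!: sum_in act_in funpow_T_in)

lemma peval_pCons: "x \<in> V \<Longrightarrow> peval (pCons a P) x = act a x + T (peval P x)"
proof -
  assume x: "x \<in> V"
  have "peval (pCons a P) x = (\<Sum>k\<le>Suc (degree P). act (coeff (pCons a P) k) ((T ^^ k) x))"
    using x by (intro peval_conv_sum) (auto simp: degree_pCons_le)
  also have "\<dots> = act a x + (\<Sum>k\<le>degree P. act (coeff P k) ((T ^^ Suc k) x))"
    by (subst sum.atMost_Suc_shift) simp
  also have "(\<Sum>k\<le>degree P. act (coeff P k) ((T ^^ Suc k) x)) = T (peval P x)"
    unfolding peval_def using x by (subst T_sum) (auto simp: act_in funpow_T_in T_act)
  finally show ?thesis .
qed

lemma peval_0: "x \<in> V \<Longrightarrow> peval 0 x = 0"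
  by (simp add: peval_def act_zero_left)

lemma peval_const: "x \<in> V \<Longrightarrow> peval [:a:] x = act a x"
  by (simp add: peval_def)

lemma peval_1: "x \<in> V \<Longrightarrow> peval 1 x = x"
  using peval_const[of x 1] by (simp add: act_one one_pCons)

lemma peval_add: "x \<in> V \<Longrightarrow> peval (P + Q) x = peval P x + peval Q x"
proof -
  assume x: "x \<in> V"
  define N where "N = max (degree P) (degree Q)"
  have "peval (P + Q) x = (\<Sum>k\<le>N. act (coeff (P + Q) k) ((T ^^ k) x))"
    using x by (intro peval_conv_sum) (auto simp: N_def degree_add_le)
  also have "\<dots> = (\<Sum>k\<le>N. act (coeff P k) ((T ^^ k) x)) + (\<Sum>k\<le>N. act (coeff Q k) ((T ^^ k) x))"
    using x by (simp add: act_add_left funpow_T_in sum.distrib)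
  also have "\<dots> = peval P x + peval Q x"
    using x by (simp add: peval_conv_sum[of P N] peval_conv_sum[of Q N] N_def)
  finally show ?thesis .
qed

lemma peval_diff: "x \<in> V \<Longrightarrow> peval (P - Q) x = peval P x - peval Q x"
  using peval_add[of x "P - Q" Q] by (simp add: algebra_simps)

lemma peval_sum: "x \<in> V \<Longrightarrow> peval (sum F I) x = (\<Sum>i\<in>I. peval (F i) x)"
  by (induction I rule: infinite_finite_induct) (auto simp: peval_0 peval_add)

lemma peval_add_right: "x \<in> V \<Longrightarrow> y \<in> V \<Longrightarrow> peval P (x + y) = peval P x + peval P y"
  by (induction P)
    (simp_all add: peval_0 peval_pCons add_in act_add_right peval_in T_add algebra_simps)

lemma peval_zero_right: "peval P 0 = 0"
  using peval_add_right[OF zero_in zero_in, of P] by simp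

lemma peval_sum_right:
  "(\<And>i. i \<in> I \<Longrightarrow> f i \<in> V) \<Longrightarrow> peval P (sum f I) = (\<Sum>i\<in>I. peval P (f i))"
  by (induction I rule: infinite_finite_induct) (auto simp: peval_zero_right peval_add_right sum_in)

lemma peval_act: "x \<in> V \<Longrightarrow> peval P (act a x) = act a (peval P x)"
  by (induction P)
    (simp_all add: peval_0 peval_pCons act_zero_right act_in act_add_right peval_in T_act T_in
      flip: act_mult, simp add: mult.commute)

lemma peval_smult: "x \<in> V \<Longrightarrow> peval (smult a P) x = act a (peval P x)"
  by (induction P)
    (simp_all add: peval_0 peval_pCons act_zero_right act_in act_add_right peval_in T_act T_in
      act_mult)

lemma peval_mult: "x \<in> V \<Longrightarrow> peval (P * Q) x = peval P (peval Q x)"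
  by (induction P)
    (simp_all add: peval_0 peval_pCons peval_add peval_smult peval_in act_zero_left T_in)

lemma peval_monom: "x \<in> V \<Longrightarrow> peval (monom a k) x = act a ((T ^^ k) x)"
proof (induction k arbitrary: x)
  case (Suc k)
  then have "peval (monom a (Suc k)) x = T (act a ((T ^^ k) x))"
    by (simp add: monom_Suc peval_pCons act_zero_left)
  then show ?case using Suc by (simp add: T_act funpow_T_in funpow_swap1)
qed (simp add: peval_const monom_0)

lemma peval_commute:
  assumes R_in: "\<And>x. x \<in> V \<Longrightarrow> R x \<in> V"
    and R_add: "\<And>x y. x \<in> V \<Longrightarrow> y \<in> V \<Longrightarrow> R (x + y) = R x + R y"
    and R_act: "\<And>x a. x \<in> V \<Longrightarrow> R (act a x) = act a (R x)"
    and R_T: "\<And>x. x \<in> V \<Longrightarrow> R (T x) = T (R x)"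
    and x: "x \<in> V"
  shows "R (peval P x) = peval P (R x)"
  using x
proof (induction P)
  case 0
  have "R 0 = 0" using R_add[OF zero_in zero_in] by simp
  then show ?case using 0 by (simp add: peval_0 R_in)
next
  case (pCons a P)
  then show ?case by (simp add: peval_pCons R_add act_in T_in peval_in R_act R_T R_in)
qed

lemma kernel_dvd: "Q dvd P \<Longrightarrow> kernel Q \<subseteq> kernel P"
  by (auto elim!: dvdE simp: kernel_def mult.commute[of Q] peval_mult peval_zero_right)

lemma peval_sum_components:
  assumes M: "finite M" "i \<in> M" and w: "\<And>j. j \<in> M \<Longrightarrow> w j \<in> kernel (F j)"
    and E_id: "\<And>v. v \<in> kernel (F i) \<Longrightarrow> peval (E i) v = v"
    and E_0: "\<And>j v. j \<in> M \<Longrightarrow> j \<noteq> i \<Longrightarrow> v \<in> kernel (F j) \<Longrightarrow> peval (E i) v = 0"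
  shows "peval (E i) (\<Sum>j\<in>M. w j) = w i"
proof -
  have "peval (E i) (\<Sum>j\<in>M. w j) = (\<Sum>j\<in>M. if j = i then w i else 0)"
    using w by (subst peval_sum_right) (auto simp: kernel_def E_id E_0 intro!: sum.cong)
  then show ?thesis using M by simp
qed

end

lemma coprime_bezout:
  fixes a b :: "'a::euclidean_ring_gcd"
  assumes "coprime a b"
  obtains x y where "x * a + y * b = 1"
  using bezout_coefficients_fst_snd[of a b] assms by (simp add: coprime_iff_gcd_eq_1)

lemma coprime_prod_dvd:
  fixes F :: "'i \<Rightarrow> 'a::semiring_gcd"
  assumes "finite M" "\<And>i. i \<in> M \<Longrightarrow> F i dvd X"
    and "\<And>i j. i \<in> M \<Longrightarrow> j \<in> M \<Longrightarrow> i \<noteq> j \<Longrightarrow> coprime (F i) (F j)"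
  shows "prod F M dvd X"
  using assms
proof (induction M rule: finite_induct)
  case (insert i M)
  have "coprime (F i) (prod F M)"
    by (rule prod_coprime_right) (use insert in auto)
  then show ?case using insert by (simp add: divides_mult)
qed simp

lemma coprime_idempotents:
  fixes F :: "'i \<Rightarrow> 'a::euclidean_ring_gcd"
  assumes M: "finite M" and coprime: "\<And>i j. i \<in> M \<Longrightarrow> j \<in> M \<Longrightarrow> i \<noteq> j \<Longrightarrow> coprime (F i) (F j)"
  obtains E where "\<And>i j. i \<in> M \<Longrightarrow> j \<in> M \<Longrightarrow> i \<noteq> j \<Longrightarrow> F j dvd E i"
    "\<And>i. i \<in> M \<Longrightarrow> F i dvd E i - 1" "\<And>i. i \<in> M \<Longrightarrow> prod F M dvd F i * E i"
    "prod F M dvd sum E M - 1"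
proof -
  define Q where "Q i = (\<Prod>j\<in>M - {i}. F j)" for i
  have "coprime (Q i) (F i)" if "i \<in> M" for i
    unfolding Q_def using that by (intro prod_coprime_left) (auto intro: coprime)
  then have "\<exists>A B. A * Q i + B * F i = 1" if "i \<in> M" for i
    using that by (meson coprime_bezout)
  then obtain A B where bezout: "\<And>i. i \<in> M \<Longrightarrow> A i * Q i + B i * F i = 1" by metis
  define E where "E i = A i * Q i" for i
  have F_dvd_E: "F j dvd E i" if "i \<in> M" "j \<in> M" "i \<noteq> j" for i j
    unfolding E_def Q_def using that M by (intro dvd_mult dvd_prodI) auto
  have E_minus_1: "E i - 1 = - B i * F i" if "i \<in> M" for i
    using bezout[OF that] by (simp add: E_def algebra_simps)
  have "F i * E i = A i * prod F M" if "i \<in> M" for i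
    using that M by (simp add: E_def Q_def prod.remove ac_simps)
  moreover have "F i dvd sum E M - 1" if i: "i \<in> M" for i
  proof -
    have "sum E M - 1 = (E i - 1) + (\<Sum>j\<in>M - {i}. E j)"
      using i M by (simp add: sum.remove)
    moreover have "F i dvd (\<Sum>j\<in>M - {i}. E j)" using i F_dvd_E by (auto intro!: dvd_sum)
    ultimately show ?thesis using E_minus_1[OF i] by (simp add: dvd_add)
  qed
  then have "prod F M dvd sum E M - 1" by (rule coprime_prod_dvd[OF M _ coprime])
  ultimately show ?thesis using that F_dvd_E E_minus_1 by (metis dvd_triv_left dvd_triv_right)
qed

locale field_module_endo = module_endo act V T
  for act :: "'k::field_gcd \<Rightarrow> 'v::ab_group_add \<Rightarrow> 'v" and V T
begin

lemma coprime_kernels_disjoint: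
  assumes "coprime P Q" "v \<in> kernel P" "v \<in> kernel Q"
  shows "v = 0"
proof -
  obtain A B where AB: "A * P + B * Q = 1" using coprime_bezout[OF assms(1)] .
  have "v = peval (A * P + B * Q) v" using assms by (simp add: AB kernel_def peval_1)
  also have "\<dots> = 0" using assms by (simp add: kernel_def peval_add peval_mult peval_zero_right)
  finally show ?thesis .
qed

lemma primary_decomposition:
  fixes F :: "'i \<Rightarrow> 'k poly"
  assumes M: "finite M" and coprime: "\<And>i j. i \<in> M \<Longrightarrow> j \<in> M \<Longrightarrow> i \<noteq> j \<Longrightarrow> coprime (F i) (F j)"
    and annihilates: "\<And>v. v \<in> V \<Longrightarrow> peval (prod F M) v = 0"
  obtains E where "\<And>i v. i \<in> M \<Longrightarrow> v \<in> V \<Longrightarrow> peval (E i) v \<in> kernel (F i)"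
    "\<And>i v. i \<in> M \<Longrightarrow> v \<in> kernel (F i) \<Longrightarrow> peval (E i) v = v"
    "\<And>i j v. i \<in> M \<Longrightarrow> j \<in> M \<Longrightarrow> i \<noteq> j \<Longrightarrow> v \<in> kernel (F j) \<Longrightarrow> peval (E i) v = 0"
    "\<And>v. v \<in> V \<Longrightarrow> (\<Sum>i\<in>M. peval (E i) v) = v"
proof -
  obtain E where F_dvd_E: "\<And>i j. i \<in> M \<Longrightarrow> j \<in> M \<Longrightarrow> i \<noteq> j \<Longrightarrow> F j dvd E i"
    and E_minus_1: "\<And>i. i \<in> M \<Longrightarrow> F i dvd E i - 1"
    and F_E: "\<And>i. i \<in> M \<Longrightarrow> prod F M dvd F i * E i"
    and sum_E: "prod F M dvd sum E M - 1"
    using coprime_idempotents[of M F, OF M coprime] by blast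
  have V_kernel: "V = kernel (prod F M)" using annihilates by (auto simp: kernel_def)
  show ?thesis
  proof
    fix i v assume "i \<in> M" "v \<in> V"
    then have "peval (F i * E i) v = 0" using kernel_dvd[OF F_E] V_kernel by (auto simp: kernel_def)
    then show "peval (E i) v \<in> kernel (F i)"
      using \<open>v \<in> V\<close> by (simp add: kernel_def peval_in peval_mult)
  next
    fix i v assume "i \<in> M" "v \<in> kernel (F i)"
    then have "peval (E i - 1) v = 0" using kernel_dvd[OF E_minus_1] by (auto simp: kernel_def)
    then show "peval (E i) v = v" using \<open>v \<in> kernel (F i)\<close>
      by (simp add: kernel_def peval_diff peval_1)
  next
    fix i j v assume "i \<in> M" "j \<in> M" "i \<noteq> j" "v \<in> kernel (F j)"
    then show "peval (E i) v = 0" using kernel_dvd[OF F_dvd_E] by (auto simp: kernel_def)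
  next
    fix v assume "v \<in> V"
    then have "peval (sum E M - 1) v = 0" using kernel_dvd[OF sum_E] V_kernel
      by (auto simp: kernel_def)
    then show "(\<Sum>i\<in>M. peval (E i) v) = v" using \<open>v \<in> V\<close> by (simp add: peval_diff peval_1 peval_sum)
  qed
qed

end

definition poly_shift :: "'a::idom \<Rightarrow> 'a poly \<Rightarrow> 'a poly" where
  "poly_shift d p = pcompose p [:d, 1:]"

lemma poly_poly_shift: "poly (poly_shift d p) x = poly p (x + d)"
  by (simp add: poly_shift_def poly_pcompose add.commute)

lemma poly_shift_hom:
  "poly_shift d 0 = 0" "poly_shift d [:c:] = [:c:]"
  "poly_shift d (p + q) = poly_shift d p + poly_shift d q"
  "poly_shift d (p * q) = poly_shift d p * poly_shift d q"
  by (simp_all add: poly_shift_def pcompose_add pcompose_mult)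

lemma poly_shift_poly_shift: "poly_shift a (poly_shift b p) = poly_shift (a + b) p"
  by (simp add: poly_shift_def pcompose_pCons add.commute flip: pcompose_assoc)

lemma poly_shift_zero: "poly_shift 0 p = p"
  by (simp add: poly_shift_def)

lemma poly_shift_eq_0_iff [simp]: "poly_shift d p = 0 \<longleftrightarrow> p = 0"
  by (metis poly_shift_hom(1) poly_shift_poly_shift poly_shift_zero add.left_inverse)

lemma degree_poly_shift: "degree (poly_shift d p) = degree p"
  by (simp add: poly_shift_def degree_pcompose)

lemma lead_coeff_poly_shift: "lead_coeff (poly_shift d p) = lead_coeff p"
  by (simp add: poly_shift_def lead_coeff_comp)

lemma poly_shift_fixed_imp_const:
  fixes q :: "'a::{idom,ring_char_0} poly"
  assumes "d \<noteq> 0" "poly_shift d q = q"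
  shows "q = [:coeff q 0:]"
proof -
  have "poly q (of_nat n * d) = poly q 0" for n
  proof (induction n)
    case (Suc n)
    have "poly q (of_nat (Suc n) * d) = poly (poly_shift d q) (of_nat n * d)"
      by (simp add: poly_poly_shift algebra_simps)
    then show ?case using Suc assms(2) by simp
  qed simp
  then have "range (\<lambda>n. of_nat n * d) \<subseteq> {x. poly (q - [:poly q 0:]) x = 0}"
    by auto
  moreover have "infinite (range (\<lambda>n::nat. of_nat n * d))"
    using assms(1) by (intro range_inj_infinite) (auto simp: inj_def)
  ultimately have "q - [:poly q 0:] = 0"
    using poly_roots_finite finite_subset by blast
  then show ?thesis by (simp add: poly_0_coeff_0)
qed

lemma poly_shift_ratio_const:
  fixes p l :: "'a::{field_gcd,ring_char_0} poly"
  assumes d: "d \<noteq> 0" and l: "l \<noteq> 0" and eq: "poly_shift d p * l = p * poly_shift d l"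
  obtains c where "p = smult c l"
proof -
  define g where "g = gcd p l"
  have g: "g \<noteq> 0" using l by (simp add: g_def)
  obtain a b where ab: "p = a * g" "l = b * g" "coprime a b"
    using gcd_coprime_exists[of p l] g unfolding g_def by blast
  have b: "b \<noteq> 0" using l ab(2) by auto
  have "(poly_shift d a * b) * (poly_shift d g * g) = (a * poly_shift d b) * (poly_shift d g * g)"
    using eq ab(1,2) by (simp add: poly_shift_hom algebra_simps)
  then have e: "poly_shift d a * b = a * poly_shift d b" using g by simp
  then have "b dvd poly_shift d b"
    using ab(3) by (metis coprime_commute coprime_dvd_mult_right_iff dvd_triv_right)
  then obtain k where k: "poly_shift d b = b * k" by (elim dvdE)
  have "k \<noteq> 0" using k b by auto
  then have "degree k = 0" using k b degree_poly_shift[of d b] by (simp add: degree_mult_eq)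
  then obtain \<kappa> where \<kappa>: "k = [:\<kappa>:]" by (elim degree_eq_zeroE)
  have "\<kappa> \<noteq> 0" using \<open>k \<noteq> 0\<close> \<kappa> by simp
  then have "\<kappa> * lead_coeff b = lead_coeff b" using k \<kappa> lead_coeff_poly_shift[of d b] by simp
  then have "poly_shift d b = b" using k \<kappa> b by simp
  then have b_const: "b = [:coeff b 0:]" by (rule poly_shift_fixed_imp_const[OF d])
  have "poly_shift d a = a" using e b \<open>poly_shift d b = b\<close> by simp
  then have a_const: "a = [:coeff a 0:]" by (rule poly_shift_fixed_imp_const[OF d])
  have "coeff b 0 \<noteq> 0" using b b_const by auto
  moreover have "p = smult (coeff a 0) g" "l = smult (coeff b 0) g"
    using ab(1,2) a_const b_const by (metis mult_pCons_left mult_zero_left pCons_0_0 add_0_right)+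
  ultimately have "p = smult (coeff a 0 / coeff b 0) l" by simp
  then show ?thesis by (rule that)
qed

lemma associated_if_dvd_linear_mult:
  fixes A B E :: "'a::field poly"
  assumes A: "A \<noteq> 0" and B: "B \<noteq> 0" and deg: "degree A = degree B" and E: "degree E = 1"
    and AB: "A dvd B * E" and BA: "B dvd A * E"
  obtains c where "B = smult c A"
proof -
  have E0: "E \<noteq> 0" using E by auto
  have cancel: "\<exists>c. Y = smult c X"
    if "Y * E = X * (E * k)" "X \<noteq> 0" "Y \<noteq> 0" "degree X = degree Y" for X Y k
  proof -
    have Y: "Y = X * k" using that(1) E0 by (simp add: mult.left_commute[of X])
    then have "degree k = 0" using that(2-4) by (auto simp: degree_mult_eq)
    then obtain c where "k = [:c:]" by (elim degree_eq_zeroE)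
    then show ?thesis using Y by auto
  qed
  obtain u where u: "B * E = A * u" using AB by (elim dvdE)
  obtain u' where u': "A * E = B * u'" using BA by (elim dvdE)
  have "(A * B) * (E * E) = (A * B) * (u * u')"
    using u u' by (metis mult.assoc mult.commute)
  then have "u * u' = E * E" using A B by simp
  then have "E dvd u * u'" by simp
  moreover have "prime_elem E" using E by (metis degree1_coeffs prime_elem_linear_field_poly)
  ultimately have "E dvd u \<or> E dvd u'" by (simp add: prime_elem_dvd_mult_iff)
  then show ?thesis
  proof
    assume "E dvd u"
    then obtain k where "u = E * k" by (elim dvdE)
    then show ?thesis using cancel[of B A k] u A B deg that by auto
  next
    assume "E dvd u'"
    then obtain k where "u' = E * k" by (elim dvdE)
    then obtain c where c: "A = smult c B" using cancel[of A B k] u' A B deg by auto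
    then have "B = smult (inverse c) A" using A by auto
    then show ?thesis by (rule that)
  qed
qed

lemma map_poly_ring_hom:
  fixes f :: "'a::comm_ring_1 \<Rightarrow> 'b::comm_ring_1"
  assumes f0: "f 0 = 0" and f_add: "\<And>a b. f (a + b) = f a + f b"
    and f_mult: "\<And>a b. f (a * b) = f a * f b"
  shows "map_poly f (P * Q) = map_poly f P * map_poly f Q"
proof (induction P)
  case (pCons a P)
  have map_poly_add: "map_poly f (R + S) = map_poly f R + map_poly f S" for R S
    by (rule poly_eqI) (simp add: coeff_map_poly f0 f_add)
  show ?case
    using pCons.IH by (simp add: map_poly_add map_poly_smult f0 f_mult map_poly_pCons)
qed simp

lemma map_poly_shift_mult:
  "map_poly (poly_shift d) (P * Q) = map_poly (poly_shift d) P * map_poly (poly_shift d) Q"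
  by (rule map_poly_ring_hom) (simp_all add: poly_shift_hom)

lemma map_poly_shift_smult:
  "map_poly (poly_shift d) (smult c P) = smult (poly_shift d c) (map_poly (poly_shift d) P)"
  by (rule map_poly_smult) (simp_all add: poly_shift_hom)

lemma map_poly_shift_shift:
  "map_poly (poly_shift a) (map_poly (poly_shift b) P) = map_poly (poly_shift (a + b)) P"
  by (simp add: map_poly_map_poly poly_shift_hom comp_def poly_shift_poly_shift)

lemma map_poly_shift_zero: "map_poly (poly_shift 0) P = P"
  by (simp add: poly_shift_zero map_poly_idI)

lemma degree_map_poly_shift: "degree (map_poly (poly_shift d) P) = degree P"
  by (rule degree_map_poly) simp

lemma map_poly_shift_eq_0_iff [simp]: "map_poly (poly_shift d) P = 0 \<longleftrightarrow> P = 0"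
  by (subst map_poly_eq_0_iff) (auto simp: poly_shift_hom)

lemma fract_poly_dvd_if_smult_eq:
  fixes X Y Z :: "'a::idom poly"
  assumes "smult c X = Y * Z" "c \<noteq> 0"
  shows "fract_poly Y dvd fract_poly X"
proof -
  have "smult (to_fract c) (fract_poly X) = fract_poly Y * fract_poly Z"
    using arg_cong[OF assms(1), of fract_poly] by (simp only: fract_poly_smult fract_poly_mult)
  then have "fract_poly Y dvd smult (to_fract c) (fract_poly X)" by (simp only: dvd_triv_left)
  then show ?thesis by (rule dvd_smult_cancel) (simp add: assms(2))
qed

lemma bivariate_shift_invariant_factor:
  fixes m :: "'a::{field_gcd,ring_char_0} poly poly"
  assumes d: "d \<noteq> 0" and m: "m \<noteq> 0" and a: "a \<noteq> 0"
    and eq: "smult a (map_poly (poly_shift d) m) = smult b m"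
  obtains M where "m = smult (lead_coeff m) (map_poly (\<lambda>c. [:c:]) M)"
proof -
  define l where "l = lead_coeff m"
  have l: "l \<noteq> 0" using m by (simp add: l_def)
  have coeff_eq: "a * poly_shift d (coeff m k) = b * coeff m k" for k
    using arg_cong[OF eq, of "\<lambda>P. coeff P k"] by (simp add: coeff_map_poly poly_shift_hom)
  have "poly_shift d (coeff m k) * l = coeff m k * poly_shift d l" for k
  proof -
    have "a * (poly_shift d (coeff m k) * l) = (b * coeff m k) * l"
      by (simp add: coeff_eq mult.assoc flip: mult.assoc[of a])
    also have "\<dots> = a * (coeff m k * poly_shift d l)"
      using coeff_eq[of "degree m"] by (simp add: l_def algebra_simps)
    finally show ?thesis using a by simp
  qed
  then have "\<forall>k. \<exists>r. coeff m k = smult r l" using poly_shift_ratio_const[OF d l] by metis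
  then obtain c where c: "\<And>k. coeff m k = smult (c k) l" by metis
  define M where "M = (\<Sum>k\<le>degree m. monom (c k) k)"
  have "m = smult l (map_poly (\<lambda>c. [:c:]) M)"
  proof (rule poly_eqI)
    fix k
    show "coeff m k = coeff (smult l (map_poly (\<lambda>c. [:c:]) M)) k"
    proof (cases "k \<le> degree m")
      case True
      then show ?thesis by (simp add: c M_def coeff_map_poly coeff_sum mult.commute)
    next
      case False
      then show ?thesis by (simp add: M_def coeff_map_poly coeff_sum coeff_eq_0)
    qed
  qed
  then show ?thesis unfolding l_def by (rule that)
qed

lemma coprime_linear_power:
  fixes a b :: "'a::field_gcd"
  assumes "a \<noteq> b"
  shows "coprime ([:-a, 1:] ^ m) ([:-b, 1:] ^ n)"
proof -
  have "coprime [:-a, 1:] [:-b, 1:]"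
  proof (rule coprimeI)
    fix c assume "c dvd [:-a, 1:]" "c dvd [:-b, 1:]"
    then have "c dvd [:-a, 1:] - [:-b, 1:]" by (rule dvd_diff)
    then have "c dvd [:b - a:]" by simp
    moreover have "is_unit [:b - a:]" using assms
      by (simp add: is_unit_const_poly_iff dvd_field_iff)
    ultimately show "is_unit c" by (rule dvd_unit_imp_unit)
  qed
  then show ?thesis by simp
qed

lemma sum_apply_fun: "(\<Sum>i\<in>A. g i) x = (\<Sum>i\<in>A. g i x)"
  by (induction A rule: infinite_finite_induct) auto

lemma field_functions_dependent:
  fixes f :: "nat \<Rightarrow> 'a \<Rightarrow> 'k::field"
  assumes S: "finite S" and supp: "\<And>k x. x \<notin> S \<Longrightarrow> f k x = 0" and N: "card S < N"
  obtains a where "\<exists>k<N. a k \<noteq> 0" "\<And>x. (\<Sum>k<N. a k * f k x) = 0"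
proof (cases "inj_on f {..<N}")
  case False
  then obtain i j where ij: "i < N" "j < N" "i \<noteq> j" "f i = f j"
    by (auto simp: inj_on_def)
  define a :: "nat \<Rightarrow> 'k" where "a k = (if k = i then 1 else if k = j then -1 else 0)" for k
  have "(\<Sum>k<N. a k * f k x) = (\<Sum>k\<in>{i, j}. a k * f k x)" for x
    using ij by (intro sum.mono_neutral_right) (auto simp: a_def)
  then have "(\<Sum>k<N. a k * f k x) = 0" for x
    using ij by (simp add: a_def)
  moreover have "a i \<noteq> 0" by (simp add: a_def)
  ultimately show ?thesis using that ij by blast
next
  case True
  interpret F: vector_space "\<lambda>c (g :: 'a \<Rightarrow> 'k) x. c * g x"
    by unfold_locales (auto simp: fun_eq_iff algebra_simps)
  define \<delta> :: "'a \<Rightarrow> 'a \<Rightarrow> 'k" where "\<delta> x y = of_bool (y = x)" for x y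
  have f_span: "f k \<in> F.span (\<delta> ` S)" for k
  proof -
    have "f k = (\<Sum>x\<in>S. (\<lambda>y. f k x * \<delta> x y))"
      using S supp by (simp add: fun_eq_iff \<delta>_def sum_apply_fun Int_insert_right)
    also have "\<dots> \<in> F.span (\<delta> ` S)"
      by (intro F.span_sum F.span_scale F.span_base) auto
    finally show ?thesis .
  qed
  have "F.dependent (f ` {..<N})"
  proof (rule ccontr)
    assume "F.independent (f ` {..<N})"
    then have "card (f ` {..<N}) \<le> card (\<delta> ` S)"
      using F.independent_span_bound[of "\<delta> ` S"] S f_span by auto
    also have "\<dots> \<le> card S" using S by (rule card_image_le)
    finally show False using True N by (simp add: card_image)
  qed
  then obtain u where u: "\<exists>g\<in>f ` {..<N}. u g \<noteq> 0" "(\<Sum>g\<in>f ` {..<N}. (\<lambda>x. u g * g x)) = 0"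
    using F.dependent_finite by auto
  have "(\<Sum>k<N. u (f k) * f k x) = 0" for x
    using fun_cong[OF u(2), of x] True by (simp add: sum.reindex sum_apply_fun)
  moreover have "\<exists>k<N. u (f k) \<noteq> 0" using u(1) by auto
  ultimately show ?thesis using that[of "\<lambda>k. u (f k)"] by blast
qed

lemma fract_common_denominator:
  fixes r :: "'i \<Rightarrow> 'a::idom fract"
  assumes "finite A"
  obtains D where "D \<noteq> 0" "\<And>k. k \<in> A \<Longrightarrow> \<exists>n. r k = to_fract n / to_fract D"
  using assms
proof (induction A arbitrary: thesis rule: finite_induct)
  case empty then show ?case using one_neq_zero by blast
next
  case (insert k A)
  then obtain D where D: "D \<noteq> 0" "\<And>j. j \<in> A \<Longrightarrow> \<exists>n. r j = to_fract n / to_fract D" by blast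
  obtain a b where ab: "r k = Fract a b" "b \<noteq> 0" by (cases "r k") auto
  have common: "\<exists>n. r j = to_fract n / to_fract (D * b)" if j: "j \<in> insert k A" for j
  proof (cases "j = k")
    case True
    then show ?thesis using ab D by (intro exI[of _ "a * D"]) (simp add: Fract_conv_to_fract)
  next
    case False
    then obtain n where "r j = to_fract n / to_fract D" using D j by auto
    then show ?thesis using ab D by (intro exI[of _ "n * b"]) simp
  qed
  moreover have "D * b \<noteq> 0" using D ab by simp
  ultimately show ?case using insert.prems by blast
qed

lemma idom_functions_dependent:
  fixes f :: "nat \<Rightarrow> 'a \<Rightarrow> 'r::idom"
  assumes S: "finite S" and supp: "\<And>k x. x \<notin> S \<Longrightarrow> f k x = 0" and N: "card S < N"
  obtains n where "\<exists>k<N. n k \<noteq> 0" "\<And>x. (\<Sum>k<N. n k * f k x) = 0"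
proof -
  obtain a where a: "\<exists>k<N. a k \<noteq> 0" "\<And>x. (\<Sum>k<N. a k * to_fract (f k x)) = 0"
    using field_functions_dependent[of S "\<lambda>k x. to_fract (f k x)" N] assms by auto
  obtain D where D: "D \<noteq> 0" "\<And>k. k \<in> {..<N} \<Longrightarrow> \<exists>n. a k = to_fract n / to_fract D"
    using fract_common_denominator[of "{..<N}" a] by auto
  then obtain n where n: "\<And>k. k < N \<Longrightarrow> a k = to_fract (n k) / to_fract D"
    by (metis lessThan_iff)
  have "to_fract (\<Sum>k<N. n k * f k x) = to_fract D * (\<Sum>k<N. a k * to_fract (f k x))" for x
    using D(1) by (simp add: n sum_distrib_left)
  then have "(\<Sum>k<N. n k * f k x) = 0" for x
    using a(2) by (simp del: to_fract_sum)
  moreover have "\<exists>k<N. n k \<noteq> 0" using a(1) n by fastforce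
  ultimately show ?thesis using that by blast
qed

locale sl2_mod =
  fixes s :: "complex \<Rightarrow> 'v::ab_group_add \<Rightarrow> 'v" and V :: "'v set"
    and Lm Lz Lp :: "'v \<Rightarrow> 'v"
  assumes sl2: "sl2_module s V Lm Lz Lp"
begin

abbreviation Cas where "Cas \<equiv> casimir Lm Lz Lp"

lemma scale_vector_space: "vector_space s"
  using sl2 by (simp add: sl2_module_def)

sublocale vector_space s by (rule scale_vector_space)

lemma V_closed: "0 \<in> V" "x \<in> V \<Longrightarrow> y \<in> V \<Longrightarrow> x + y \<in> V" "x \<in> V \<Longrightarrow> s c x \<in> V"
  "x \<in> V \<Longrightarrow> - x \<in> V" "x \<in> V \<Longrightarrow> y \<in> V \<Longrightarrow> x - y \<in> V"
proof -
  have sub: "subspace V" using sl2 by (simp add: sl2_module_def)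
  show "0 \<in> V" "x \<in> V \<Longrightarrow> y \<in> V \<Longrightarrow> x + y \<in> V" "x \<in> V \<Longrightarrow> s c x \<in> V"
    "x \<in> V \<Longrightarrow> - x \<in> V" "x \<in> V \<Longrightarrow> y \<in> V \<Longrightarrow> x - y \<in> V"
    using sub by (simp_all add: subspace_0 subspace_add subspace_scale subspace_neg subspace_diff)
qed

lemma op_on_linear:
  assumes "op_on s V R"
  shows "x \<in> V \<Longrightarrow> R x \<in> V" "x \<in> V \<Longrightarrow> y \<in> V \<Longrightarrow> R (x + y) = R x + R y"
    "x \<in> V \<Longrightarrow> R (s c x) = s c (R x)" "x \<in> V \<Longrightarrow> R (- x) = - R x"
    "x \<in> V \<Longrightarrow> y \<in> V \<Longrightarrow> R (x - y) = R x - R y" "R 0 = 0"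
proof -
  have add: "x \<in> V \<Longrightarrow> y \<in> V \<Longrightarrow> R (x + y) = R x + R y" for x y
    using assms by (simp add: op_on_def)
  have scale: "x \<in> V \<Longrightarrow> R (s c x) = s c (R x)" for x c
    using assms by (simp add: op_on_def)
  have neg: "x \<in> V \<Longrightarrow> R (- x) = - R x" for x
    using scale[of x "-1"] by simp
  show "x \<in> V \<Longrightarrow> R x \<in> V" using assms by (simp add: op_on_def)
  show "x \<in> V \<Longrightarrow> y \<in> V \<Longrightarrow> R (x + y) = R x + R y" by (fact add)
  show "x \<in> V \<Longrightarrow> R (s c x) = s c (R x)" by (fact scale)
  show "x \<in> V \<Longrightarrow> R (- x) = - R x" by (fact neg)
  show "x \<in> V \<Longrightarrow> y \<in> V \<Longrightarrow> R (x - y) = R x - R y"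
    using add[of x "- y"] neg[of y] V_closed(4)[of y] by simp
  show "R 0 = 0" using scale[OF V_closed(1), of 0] by simp
qed

lemma op_on_L: "op_on s V Lm" "op_on s V Lz" "op_on s V Lp"
  using sl2 by (auto simp: sl2_module_def)

lemmas Lm_lin = op_on_linear[OF op_on_L(1)]
  and Lz_lin = op_on_linear[OF op_on_L(2)]
  and Lp_lin = op_on_linear[OF op_on_L(3)]

lemma Lm_Lz: "x \<in> V \<Longrightarrow> Lm (Lz x) = Lz (Lm x) - Lm x"
  and Lp_Lz: "x \<in> V \<Longrightarrow> Lp (Lz x) = Lz (Lp x) + Lp x"
  and Lm_Lp: "x \<in> V \<Longrightarrow> Lm (Lp x) = Lp (Lm x) - s 2 (Lz x)"
  using sl2 by (auto simp: sl2_module_def algebra_simps)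

lemma scale_two: "s 2 x = x + x"
  using scale_left_distrib[of 1 1 x] by simp

lemma Cas_alt: "x \<in> V \<Longrightarrow> Cas x = Lz (Lz x) - Lz x - Lp (Lm x) + s 2 (Lz x)"
  by (simp add: casimir_def Lm_Lp)

lemma op_on_Cas: "op_on s V Cas"
  unfolding op_on_def
  by (auto simp: Cas_alt V_closed Lm_lin Lz_lin Lp_lin algebra_simps)

lemmas Cas_lin = op_on_linear[OF op_on_Cas]

lemma Cas_Lz: "x \<in> V \<Longrightarrow> Cas (Lz x) = Lz (Cas x)"
  and Cas_Lm: "x \<in> V \<Longrightarrow> Cas (Lm x) = Lm (Cas x)"
  and Cas_Lp: "x \<in> V \<Longrightarrow> Cas (Lp x) = Lp (Cas x)"
  by (simp_all add: Cas_alt V_closed Lm_lin Lz_lin Lp_lin Lm_Lz Lp_Lz Lm_Lp scale_two algebra_simps)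

lemma module_endo_op_on: "op_on s V R \<Longrightarrow> module_endo s V R"
  by unfold_locales (auto simp: V_closed op_on_linear scale_left_distrib scale_right_distrib)

sublocale Z: module_endo s V Lz by (rule module_endo_op_on[OF op_on_L(2)])
sublocale C: field_module_endo s V Cas
  unfolding field_module_endo_def by (rule module_endo_op_on[OF op_on_Cas])

lemma poly_op_eq_Z_peval: "poly_op s Lz = Z.peval"
  by (simp add: fun_eq_iff poly_op_def Z.peval_def)

lemma Z_peval_commute:
  assumes "op_on s V R" "\<And>x. x \<in> V \<Longrightarrow> R (Lz x) = Lz (R x)" "x \<in> V"
  shows "R (Z.peval p x) = Z.peval p (R x)"
  by (rule Z.peval_commute) (use assms op_on_linear[OF assms(1)] in auto)

lemma C_peval_commute:
  assumes "op_on s V R" "\<And>x. x \<in> V \<Longrightarrow> R (Cas x) = Cas (R x)" "x \<in> V"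
  shows "R (C.peval p x) = C.peval p (R x)"
  by (rule C.peval_commute) (use assms op_on_linear[OF assms(1)] in auto)

lemma op_on_Z_peval: "op_on s V (Z.peval p)"
  by (auto simp: op_on_def Z.peval_in Z.peval_add_right Z.peval_act)

lemma Cas_Z_peval: "x \<in> V \<Longrightarrow> Cas (Z.peval p x) = Z.peval p (Cas x)"
  by (intro Z_peval_commute[OF op_on_Cas]) (auto simp: Cas_Lz)

text \<open>For a polynomial P in C with coefficients in C[z], ZC.peval P applies P(z, C); this makes
  sense because C commutes with L_0.\<close>
sublocale ZC: module_endo Z.peval V Cas
  by unfold_locales
    (auto simp: V_closed Z.peval_in Z.peval_add Z.peval_add_right Z.peval_mult Z.peval_1 Cas_lin
      Cas_Z_peval)

lemma Z_peval_shift: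
  assumes R: "op_on s V R" and R_Lz: "\<And>x. x \<in> V \<Longrightarrow> R (Lz x) = Lz (R x) + s d (R x)"
    and x: "x \<in> V"
  shows "R (Z.peval p x) = Z.peval (poly_shift d p) (R x)"
  using x
proof (induction p)
  case 0 then show ?case by (simp add: Z.peval_0 op_on_linear[OF R] poly_shift_hom)
next
  case (pCons a p)
  have Rx: "R x \<in> V" using pCons op_on_linear[OF R] by auto
  have "R (Z.peval (pCons a p) x) = s a (R x) + Lz (R (Z.peval p x)) + s d (R (Z.peval p x))"
    using pCons
      by (simp add: Z.peval_pCons op_on_linear[OF R] V_closed Lz_lin Z.peval_in R_Lz add.assoc)
  also have "\<dots> = Z.peval (poly_shift d (pCons a p)) (R x)"
    using pCons Rx
    by (simp add: poly_shift_def pcompose_pCons Z.peval_add Z.peval_const Z.peval_mult Z.peval_pCons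
        Z.peval_0 Z.peval_in Lz_lin V_closed Z.peval_1 Z.peval_smult algebra_simps)
  finally show ?case .
qed

lemma ZC_peval_shift:
  assumes R: "op_on s V R" and R_Lz: "\<And>x. x \<in> V \<Longrightarrow> R (Lz x) = Lz (R x) + s d (R x)"
    and R_Cas: "\<And>x. x \<in> V \<Longrightarrow> R (Cas x) = Cas (R x)" and x: "x \<in> V"
  shows "R (ZC.peval P x) = ZC.peval (map_poly (poly_shift d) P) (R x)"
  using x
proof (induction P)
  case 0 then show ?case by (simp add: ZC.peval_0 op_on_linear[OF R])
next
  case (pCons a P)
  then show ?case
    using op_on_linear[OF R]
    by (simp add: ZC.peval_pCons map_poly_pCons poly_shift_hom Z.peval_in ZC.peval_in Cas_lin
        Z_peval_shift[OF R R_Lz] R_Cas)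
qed

lemma Lm_ZC_peval: "x \<in> V \<Longrightarrow> Lm (ZC.peval P x) = ZC.peval (map_poly (poly_shift (-1)) P) (Lm x)"
  by (rule ZC_peval_shift[OF op_on_L(1)]) (auto simp: Lm_Lz Cas_Lm)

lemma Lp_ZC_peval: "x \<in> V \<Longrightarrow> Lp (ZC.peval P x) = ZC.peval (map_poly (poly_shift 1) P) (Lp x)"
  by (rule ZC_peval_shift[OF op_on_L(3)]) (auto simp: Lp_Lz Cas_Lp)

lemma funpow_casimir_shift: "v \<in> V \<Longrightarrow> ((\<lambda>w. Cas w - s \<mu> w) ^^ n) v = C.peval ([:-\<mu>, 1:] ^ n) v"
proof (induction n)
  case 0 then show ?case by (simp add: C.peval_1)
next
  case (Suc n)
  have "C.peval ([:-\<mu>, 1:] ^ Suc n) v = C.peval [:-\<mu>, 1:] (C.peval ([:-\<mu>, 1:] ^ n) v)"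
    by (simp only: power_Suc C.peval_mult Suc.prems)
  also have "\<dots> = Cas (C.peval ([:-\<mu>, 1:] ^ n) v) - s \<mu> (C.peval ([:-\<mu>, 1:] ^ n) v)"
    using Suc.prems by (simp add: C.peval_pCons C.peval_0 C.peval_in Cas_lin)
  finally show ?case using Suc by simp
qed

lemma C_peval_Z_peval: "x \<in> V \<Longrightarrow> C.peval p (Z.peval q x) = Z.peval q (C.peval p x)"
  using C_peval_commute[OF op_on_Z_peval] Cas_Z_peval by simp

lemma op_on_C_kernel:
  assumes R: "op_on s V R" and R_Cas: "\<And>x. x \<in> V \<Longrightarrow> R (Cas x) = Cas (R x)"
  shows "op_on s (C.kernel P) R"
  using op_on_linear[OF R] C_peval_commute[OF R R_Cas, symmetric]
  by (auto simp: op_on_def C.kernel_def)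

lemma sl2_module_C_kernel: "sl2_module s (C.kernel P) Lm Lz Lp"
proof -
  have "subspace (C.kernel P)"
    by (auto simp: subspace_def C.kernel_def V_closed C.peval_zero_right C.peval_add_right
        C.peval_act)
  moreover have "op_on s (C.kernel P) Lm" "op_on s (C.kernel P) Lz" "op_on s (C.kernel P) Lp"
    by (auto intro!: op_on_C_kernel op_on_L simp: Cas_Lm Cas_Lz Cas_Lp)
  ultimately show ?thesis
    using sl2 scale_vector_space by (auto simp: sl2_module_def C.kernel_def)
qed

lemma gen_casimir_level_C_kernel:
  "n \<ge> 1 \<Longrightarrow> gen_casimir_level s (C.kernel ([:-\<mu>, 1:] ^ n)) Lm Lz Lp \<mu>"
  by (auto simp: gen_casimir_level_def funpow_casimir_shift C.kernel_def)

end

text \<open>z^2 - z - C and z^2 + z - C, as polynomials in C over C[z].\<close>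
definition LmLp_poly :: "complex poly poly" where "LmLp_poly = [:[:0, -1, 1:], [:-1:]:]"
definition LpLm_poly :: "complex poly poly" where "LpLm_poly = [:[:0, 1, 1:], [:-1:]:]"

locale rational_sl2 = sl2_mod +
  assumes rational: "rational_module s V Lm Lz Lp"
begin

lemma Z_peval_bij: "p \<noteq> 0 \<Longrightarrow> bij_betw (Z.peval p) V V"
  using rational by (simp add: rational_module_def poly_op_eq_Z_peval)

lemma Z_peval_eq_0: "p \<noteq> 0 \<Longrightarrow> x \<in> V \<Longrightarrow> Z.peval p x = 0 \<Longrightarrow> x = 0"
  using Z_peval_bij[of p] Z.peval_zero_right[of p] V_closed(1) by (metis bij_betw_def inj_onD)

lemma finite_Z_span:
  obtains S where "finite S" "S \<subseteq> V"
    "\<And>v. v \<in> V \<Longrightarrow> \<exists>q c. q \<noteq> 0 \<and> Z.peval q v = (\<Sum>u\<in>S. Z.peval (c u) u)"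
  using rational that by (auto simp: rational_module_def poly_op_eq_Z_peval)

text \<open>The vectors C^k u, k \<le> card S, are linearly dependent over C(z), which after clearing
  denominators yields a nonzero polynomial in C with coefficients in C[z] killing u.\<close>
lemma ZC_annihilator_vector:
  assumes u: "u \<in> V"
  obtains P where "P \<noteq> 0" "ZC.peval P u = 0"
proof -
  obtain S where S: "finite S" "S \<subseteq> V"
    "\<And>v. v \<in> V \<Longrightarrow> \<exists>q c. q \<noteq> 0 \<and> Z.peval q v = (\<Sum>x\<in>S. Z.peval (c x) x)"
    using finite_Z_span by blast
  define N where "N = Suc (card S)"
  have "\<forall>k. \<exists>q c. q \<noteq> 0 \<and> Z.peval q ((Cas ^^ k) u) = (\<Sum>x\<in>S. Z.peval (c x) x)"
    using S(3) u C.funpow_T_in by blast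
  then obtain q c where q: "\<And>k. q k \<noteq> 0"
    and qc: "\<And>k. Z.peval (q k) ((Cas ^^ k) u) = (\<Sum>x\<in>S. Z.peval (c k x) x)"
    by metis
  obtain n where n: "\<exists>k<N. n k \<noteq> 0" "\<And>x. (\<Sum>k<N. n k * (if x \<in> S then c k x else 0)) = 0"
    using idom_functions_dependent[of S "\<lambda>k x. if x \<in> S then c k x else 0" N] S(1)
    by (auto simp: N_def)
  define P where "P = (\<Sum>k<N. monom (n k * q k) k)"
  have "ZC.peval P u = (\<Sum>k<N. Z.peval (n k) (Z.peval (q k) ((Cas ^^ k) u)))"
    unfolding P_def using u by (simp add: ZC.peval_sum ZC.peval_monom Z.peval_mult C.funpow_T_in)
  also have "\<dots> = (\<Sum>k<N. \<Sum>x\<in>S. Z.peval (n k * c k x) x)"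
    unfolding qc using S(2)
    by (intro sum.cong refl, subst Z.peval_sum_right)
      (auto simp: Z.peval_mult Z.peval_in intro!: sum.cong)
  also have "\<dots> = (\<Sum>x\<in>S. Z.peval (\<Sum>k<N. n k * c k x) x)"
    using S(2) by (subst sum.swap) (intro sum.cong refl; auto simp: Z.peval_sum)
  also have "\<dots> = 0"
  proof (intro sum.neutral ballI)
    fix x assume "x \<in> S"
    then have "(\<Sum>k<N. n k * c k x) = 0" using n(2)[of x] by simp
    then show "Z.peval (\<Sum>k<N. n k * c k x) x = 0" using \<open>x \<in> S\<close> S(2) by (auto simp: Z.peval_0)
  qed
  finally have "ZC.peval P u = 0" .
  moreover obtain k where "k < N" "n k \<noteq> 0" using n(1) by blast
  then have "coeff P k \<noteq> 0" using q[of k] by (simp add: P_def coeff_sum coeff_monom)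
  then have "P \<noteq> 0" by auto
  ultimately show ?thesis using that by blast
qed

lemma ZC_annihilator:
  obtains P where "P \<noteq> 0" "\<And>v. v \<in> V \<Longrightarrow> ZC.peval P v = 0"
proof -
  obtain S where S: "finite S" "S \<subseteq> V"
    "\<And>v. v \<in> V \<Longrightarrow> \<exists>q c. q \<noteq> 0 \<and> Z.peval q v = (\<Sum>x\<in>S. Z.peval (c x) x)"
    using finite_Z_span by blast
  have "\<exists>P. P \<noteq> 0 \<and> ZC.peval P u = 0" if "u \<in> S" for u
    using that S(2) by (blast intro: ZC_annihilator_vector)
  then obtain Pu where Pu: "\<And>u. u \<in> S \<Longrightarrow> Pu u \<noteq> 0 \<and> ZC.peval (Pu u) u = 0"
    by metis
  define P where "P = (\<Prod>u\<in>S. Pu u)"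
  have "P \<noteq> 0" using Pu S(1) by (simp add: P_def)
  moreover have "ZC.peval P v = 0" if v: "v \<in> V" for v
  proof -
    obtain q c where qc: "q \<noteq> 0" "Z.peval q v = (\<Sum>x\<in>S. Z.peval (c x) x)" using S(3) v by blast
    have P_S: "ZC.peval P u = 0" if "u \<in> S" for u
    proof -
      have "P = (\<Prod>w\<in>S - {u}. Pu w) * Pu u" using that S(1)
        by (simp add: P_def prod.remove mult.commute)
      then show ?thesis using that S(2) Pu[OF that]
        by (auto simp: ZC.peval_mult ZC.peval_zero_right)
    qed
    have "Z.peval q (ZC.peval P v) = ZC.peval P (Z.peval q v)" using v by (simp add: ZC.peval_act)
    also have "\<dots> = (\<Sum>x\<in>S. Z.peval (c x) (ZC.peval P x))"
      using S(2) unfolding qc(2)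
      by (subst ZC.peval_sum_right) (auto simp: ZC.peval_act Z.peval_in subsetD intro!: sum.cong)
    also have "\<dots> = 0" using P_S by (simp add: Z.peval_zero_right)
    finally show ?thesis using Z_peval_eq_0[OF qc(1)] v ZC.peval_in by blast
  qed
  ultimately show ?thesis using that by blast
qed

definition ZC_ann :: "complex poly poly set" where
  "ZC_ann = {P. \<forall>v\<in>V. ZC.peval P v = 0}"

lemma ZC_ann_mult: "P \<in> ZC_ann \<Longrightarrow> Q * P \<in> ZC_ann"
  by (simp add: ZC_ann_def ZC.peval_mult ZC.peval_zero_right)

lemma ZC_ann_smult: "P \<in> ZC_ann \<Longrightarrow> smult c P \<in> ZC_ann"
  by (simp add: ZC_ann_def ZC.peval_smult Z.peval_zero_right)

lemma ZC_ann_diff: "P \<in> ZC_ann \<Longrightarrow> Q \<in> ZC_ann \<Longrightarrow> P - Q \<in> ZC_ann"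
  by (simp add: ZC_ann_def ZC.peval_diff)

lemma ZC_ann_minimal_dvd:
  assumes m: "m \<in> ZC_ann" "m \<noteq> 0" "\<And>P. P \<in> ZC_ann \<Longrightarrow> P \<noteq> 0 \<Longrightarrow> degree m \<le> degree P"
    and P: "P \<in> ZC_ann"
  obtains c q where "c \<noteq> 0" "smult c P = m * q"
proof -
  obtain q r where qr: "pseudo_divmod P m = (q, r)" by (cases "pseudo_divmod P m") auto
  define c where "c = lead_coeff m ^ (Suc (degree P) - degree m)"
  have eq: "smult c P = m * q + r" and r: "r = 0 \<or> degree r < degree m"
    using pseudo_divmod[OF m(2) qr] by (auto simp: c_def)
  have "r = smult c P - q * m" using eq by (simp add: algebra_simps)
  also have "\<dots> \<in> ZC_ann" by (intro ZC_ann_diff ZC_ann_smult ZC_ann_mult P m(1))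
  finally have "r = 0" using r m(3) by (auto simp: not_le[symmetric])
  moreover have "c \<noteq> 0" using m(2) by (simp add: c_def)
  ultimately show ?thesis using that eq by simp
qed

lemma ZC_peval_LmLp: "v \<in> V \<Longrightarrow> ZC.peval LmLp_poly v = Lm (Lp v)"
  by (simp add: LmLp_poly_def ZC.peval_pCons ZC.peval_0 Z.peval_pCons Z.peval_0 V_closed
      Lz_lin Lm_lin Lp_lin Cas_lin casimir_def)

lemma ZC_peval_LpLm: "v \<in> V \<Longrightarrow> ZC.peval LpLm_poly v = Lp (Lm v)"
  by (simp add: LpLm_poly_def ZC.peval_pCons ZC.peval_0 Z.peval_pCons Z.peval_0 V_closed
      Lz_lin Lm_lin Lp_lin Cas_lin Cas_alt scale_two algebra_simps)

lemma ZC_ann_shift_LmLp: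
  assumes "P \<in> ZC_ann"
  shows "map_poly (poly_shift (-1)) P * LmLp_poly \<in> ZC_ann"
proof -
  have "ZC.peval (map_poly (poly_shift (-1)) P * LmLp_poly) v = Lm (ZC.peval P (Lp v))"
    if "v \<in> V" for v
    using that by (simp add: ZC.peval_mult ZC_peval_LmLp Lm_ZC_peval Lp_lin)
  then show ?thesis using assms by (simp add: ZC_ann_def Lp_lin Lm_lin)
qed

lemma ZC_ann_shift_LpLm:
  assumes "P \<in> ZC_ann"
  shows "map_poly (poly_shift 1) P * LpLm_poly \<in> ZC_ann"
proof -
  have "ZC.peval (map_poly (poly_shift 1) P * LpLm_poly) v = Lp (ZC.peval P (Lm v))"
    if "v \<in> V" for v
    using that by (simp add: ZC.peval_mult ZC_peval_LpLm Lp_ZC_peval Lm_lin)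
  then show ?thesis using assms by (simp add: ZC_ann_def Lp_lin Lm_lin)
qed

lemma ZC_ann_minimal_shift_associated:
  assumes m: "m \<in> ZC_ann" "m \<noteq> 0" "\<And>P. P \<in> ZC_ann \<Longrightarrow> P \<noteq> 0 \<Longrightarrow> degree m \<le> degree P"
  obtains a b where "a \<noteq> 0" "smult a (map_poly (poly_shift (-1)) m) = smult b m"
proof -
  let ?\<sigma> = "map_poly (poly_shift (-1 :: complex))"
  have \<sigma>_LpLm: "?\<sigma> LpLm_poly = LmLp_poly"
    by (simp add: LpLm_poly_def LmLp_poly_def map_poly_pCons poly_shift_hom poly_shift_def
        pcompose_pCons)
  obtain c1 q1 where c1: "c1 \<noteq> 0" "smult c1 (?\<sigma> m * LmLp_poly) = m * q1"
    by (rule ZC_ann_minimal_dvd[OF m ZC_ann_shift_LmLp[OF m(1)]])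
  obtain c2 q2 where c2: "c2 \<noteq> 0" "smult c2 (map_poly (poly_shift 1) m * LpLm_poly) = m * q2"
    by (rule ZC_ann_minimal_dvd[OF m ZC_ann_shift_LpLm[OF m(1)]])
  have "smult (poly_shift (-1) c2) (m * LmLp_poly) = ?\<sigma> m * ?\<sigma> q2"
    using arg_cong[OF c2(2), of "?\<sigma>"]
    by (simp add: map_poly_shift_smult map_poly_shift_mult map_poly_shift_shift map_poly_shift_zero
        \<sigma>_LpLm)
  then have "fract_poly (?\<sigma> m) dvd fract_poly m * fract_poly LmLp_poly"
    using c2(1) fract_poly_dvd_if_smult_eq by fastforce
  moreover have "fract_poly m dvd fract_poly (?\<sigma> m) * fract_poly LmLp_poly"
    using c1 fract_poly_dvd_if_smult_eq by fastforce
  moreover have "degree (fract_poly LmLp_poly) = 1"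
    by (simp add: LmLp_poly_def degree_map_poly)
  moreover have "degree (fract_poly m) = degree (fract_poly (?\<sigma> m))"
    by (simp add: degree_map_poly degree_map_poly_shift)
  ultimately obtain \<kappa> where "fract_poly (?\<sigma> m) = smult \<kappa> (fract_poly m)"
    using associated_if_dvd_linear_mult[of "fract_poly m" "fract_poly (?\<sigma> m)"] m(2) by auto
  then obtain a b where ab: "smult a (?\<sigma> m) = smult b m" "coprime a b"
    by (elim fract_poly_smult_eqE)
  have "a \<noteq> 0" using ab m(2) by auto
  then show ?thesis using that ab(1) by blast
qed

lemma ZC_peval_const_coeffs: "v \<in> V \<Longrightarrow> ZC.peval (map_poly (\<lambda>c. [:c:]) P) v = C.peval P v"
  by (induction P) (simp_all add: map_poly_pCons ZC.peval_pCons C.peval_pCons Z.peval_const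
      ZC.peval_0 C.peval_0)

lemma casimir_annihilator:
  obtains P :: "complex poly" where "P \<noteq> 0" "\<And>v. v \<in> V \<Longrightarrow> C.peval P v = 0"
proof -
  obtain P where "P \<noteq> 0" "\<And>v. v \<in> V \<Longrightarrow> ZC.peval P v = 0"
    using ZC_annihilator by blast
  then have "P \<noteq> 0" "P \<in> ZC_ann" by (simp_all add: ZC_ann_def)
  then obtain m where m: "m \<in> ZC_ann" "m \<noteq> 0" "\<And>P. P \<in> ZC_ann \<Longrightarrow> P \<noteq> 0 \<Longrightarrow> degree m \<le> degree P"
    using ex_has_least_nat[of "\<lambda>P. P \<in> ZC_ann \<and> P \<noteq> 0" P degree] by blast
  obtain a b where "a \<noteq> 0" "smult a (map_poly (poly_shift (-1)) m) = smult b m"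
    by (rule ZC_ann_minimal_shift_associated[OF m])
  then obtain M where M: "m = smult (lead_coeff m) (map_poly (\<lambda>c. [:c:]) M)"
    using bivariate_shift_invariant_factor[of "-1" m a b] m(2) by auto
  have "M \<noteq> 0" using M m(2) by auto
  moreover have "C.peval M v = 0" if v: "v \<in> V" for v
  proof -
    have "Z.peval (lead_coeff m) (C.peval M v) = ZC.peval m v"
      using v by (subst M) (simp add: ZC.peval_smult ZC_peval_const_coeffs)
    also have "\<dots> = 0" using m(1) v by (simp add: ZC_ann_def)
    finally show ?thesis using Z_peval_eq_0 m(2) v C.peval_in by (meson leading_coeff_0_iff)
  qed
  ultimately show ?thesis using that by blast
qed

lemma bij_Z_peval_C_kernel:
  assumes p: "p \<noteq> 0"
  shows "bij_betw (Z.peval p) (C.kernel P) (C.kernel P)"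
proof -
  have K: "C.kernel P \<subseteq> V" by (auto simp: C.kernel_def)
  have "Z.peval p ` C.kernel P \<subseteq> C.kernel P"
    using op_on_C_kernel[OF op_on_Z_peval] Cas_Z_peval by (auto simp: op_on_def)
  moreover have "C.kernel P \<subseteq> Z.peval p ` C.kernel P"
  proof
    fix w assume w: "w \<in> C.kernel P"
    then obtain x where x: "x \<in> V" "w = Z.peval p x"
      using Z_peval_bij[OF p] K by (auto simp: bij_betw_def)
    have "Z.peval p (C.peval P x) = C.peval P w"
      using x by (simp add: C_peval_Z_peval)
    then have "C.peval P x = 0" using w x(1) Z_peval_eq_0[OF p] C.peval_in
      by (simp add: C.kernel_def)
    then show "w \<in> Z.peval p ` C.kernel P" using x by (auto simp: C.kernel_def)
  qed
  moreover have "inj_on (Z.peval p) (C.kernel P)"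
    using Z_peval_bij[OF p] K by (meson bij_betw_def inj_on_subset)
  ultimately show ?thesis by (auto simp: bij_betw_def)
qed

lemma rational_C_kernel:
  assumes E_in: "\<And>v. v \<in> V \<Longrightarrow> C.peval E v \<in> C.kernel P"
    and E_id: "\<And>v. v \<in> C.kernel P \<Longrightarrow> C.peval E v = v"
  shows "rational_module s (C.kernel P) Lm Lz Lp"
proof -
  obtain S where S: "finite S" "S \<subseteq> V"
    "\<And>v. v \<in> V \<Longrightarrow> \<exists>q c. q \<noteq> 0 \<and> Z.peval q v = (\<Sum>u\<in>S. Z.peval (c u) u)"
    using finite_Z_span by blast
  have "\<exists>q c. q \<noteq> 0 \<and> Z.peval q w = (\<Sum>y\<in>C.peval E ` S. Z.peval (c y) y)"
    if w: "w \<in> C.kernel P" for w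
  proof -
    have wV: "w \<in> V" using w by (simp add: C.kernel_def)
    obtain q c where qc: "q \<noteq> 0" "Z.peval q w = (\<Sum>u\<in>S. Z.peval (c u) u)" using S(3) wV by blast
    have "Z.peval q w = C.peval E (Z.peval q w)" using w wV C_peval_Z_peval E_id by simp
    also have "\<dots> = (\<Sum>u\<in>S. Z.peval (c u) (C.peval E u))"
      unfolding qc(2) using S(2)
      by (subst C.peval_sum_right) (auto simp: Z.peval_in C_peval_Z_peval intro!: sum.cong)
    also have "\<dots> = (\<Sum>y\<in>C.peval E ` S. \<Sum>u | u \<in> S \<and> C.peval E u = y. Z.peval (c u) y)"
      using S(1) by (subst sum.image_gen) (auto intro!: sum.cong)
    also have "\<dots> = (\<Sum>y\<in>C.peval E ` S. Z.peval (\<Sum>u | u \<in> S \<and> C.peval E u = y. c u) y)"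
      using S(2) by (intro sum.cong refl) (auto simp: Z.peval_sum C.peval_in)
    finally show ?thesis using qc(1) by (intro exI conjI)
  qed
  moreover have "finite (C.peval E ` S)" "C.peval E ` S \<subseteq> C.kernel P"
    using S(1,2) E_in by auto
  ultimately show ?thesis
    unfolding rational_module_def poly_op_eq_Z_peval
    by (intro conjI sl2_module_C_kernel allI impI bij_Z_peval_C_kernel exI[of _ "C.peval E ` S"])
      auto
qed

lemma in_RC_gen_C_kernel:
  assumes "n \<ge> 1" and E_in: "\<And>v. v \<in> V \<Longrightarrow> C.peval E v \<in> C.kernel ([:-\<mu>, 1:] ^ n)"
    and E_id: "\<And>v. v \<in> C.kernel ([:-\<mu>, 1:] ^ n) \<Longrightarrow> C.peval E v = v"
  shows "in_RC_gen s (C.kernel ([:-\<mu>, 1:] ^ n)) Lm Lz Lp \<mu>"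
  using rational_C_kernel[OF E_in E_id] gen_casimir_level_C_kernel[OF assms(1)]
  by (simp add: in_RC_gen_def)

end

lemma rational_module_decomposition:
  fixes s :: "complex \<Rightarrow> 'v::ab_group_add \<Rightarrow> 'v"
  assumes "rational_module s V Lm Lz Lp"
  shows "\<exists>(M :: complex set) (W :: complex \<Rightarrow> 'v set). finite M \<and>
     (\<forall>\<mu>\<in>M. W \<mu> \<subseteq> V \<and> in_RC_gen s (W \<mu>) Lm Lz Lp \<mu>) \<and>
     (\<forall>v\<in>V. \<exists>w. (\<forall>\<mu>\<in>M. w \<mu> \<in> W \<mu>) \<and> v = (\<Sum>\<mu>\<in>M. w \<mu>)) \<and>
     (\<forall>w w'. (\<forall>\<mu>\<in>M. w \<mu> \<in> W \<mu> \<and> w' \<mu> \<in> W \<mu>) \<and>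
             (\<Sum>\<mu>\<in>M. w \<mu>) = (\<Sum>\<mu>\<in>M. w' \<mu>) \<longrightarrow> (\<forall>\<mu>\<in>M. w \<mu> = w' \<mu>))"
proof -
  interpret rational_sl2 s V Lm Lz Lp
    using assms by unfold_locales (simp_all add: rational_module_def)
  obtain P where P: "P \<noteq> 0" "\<And>v. v \<in> V \<Longrightarrow> C.peval P v = 0"
    using casimir_annihilator by blast
  define M where "M = {\<mu>. poly P \<mu> = 0}"
  define F where "F \<mu> = [:-\<mu>, 1:] ^ order \<mu> P" for \<mu>
  have M: "finite M" using P(1) by (simp add: M_def poly_roots_finite)
  have annihilates: "C.peval (prod F M) v = 0" if v: "v \<in> V" for v
  proof -
    have "s (lead_coeff P) (C.peval (prod F M) v) = C.peval P v"
      using v complex_poly_decompose[of P] by (simp add: F_def M_def flip: C.peval_smult)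
    then show ?thesis using P by (simp add: v)
  qed
  have coprime: "coprime (F \<mu>) (F \<nu>)" if "\<mu> \<noteq> \<nu>" for \<mu> \<nu>
    unfolding F_def using that by (rule coprime_linear_power)
  obtain E where
    E_in: "\<And>\<mu> v. \<mu> \<in> M \<Longrightarrow> v \<in> V \<Longrightarrow> C.peval (E \<mu>) v \<in> C.kernel (F \<mu>)" and
    E_id: "\<And>\<mu> v. \<mu> \<in> M \<Longrightarrow> v \<in> C.kernel (F \<mu>) \<Longrightarrow> C.peval (E \<mu>) v = v" and
    E_0: "\<And>\<mu> \<nu> v. \<mu> \<in> M \<Longrightarrow> \<nu> \<in> M \<Longrightarrow> \<mu> \<noteq> \<nu> \<Longrightarrow> v \<in> C.kernel (F \<nu>) \<Longrightarrow> C.peval (E \<mu>) v = 0" and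
    E_sum: "\<And>v. v \<in> V \<Longrightarrow> (\<Sum>\<mu>\<in>M. C.peval (E \<mu>) v) = v"
    using C.primary_decomposition[OF M coprime annihilates] by blast
  have rc: "in_RC_gen s (C.kernel (F \<mu>)) Lm Lz Lp \<mu>" if \<mu>: "\<mu> \<in> M" for \<mu>
    using \<mu> P(1) order_root[of P \<mu>] E_in[OF \<mu>] E_id[OF \<mu>] unfolding F_def
    by (intro in_RC_gen_C_kernel) (auto simp: M_def)
  have unique: "w \<mu> = w' \<mu>"
    if "\<forall>\<mu>\<in>M. w \<mu> \<in> C.kernel (F \<mu>) \<and> w' \<mu> \<in> C.kernel (F \<mu>)"
      "(\<Sum>\<mu>\<in>M. w \<mu>) = (\<Sum>\<mu>\<in>M. w' \<mu>)" "\<mu> \<in> M" for w w' \<mu>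
    using C.peval_sum_components[of M \<mu> w F E] C.peval_sum_components[of M \<mu> w' F E] M that
      E_id E_0 by auto
  show ?thesis
  proof (intro exI[of _ M] exI[of _ "\<lambda>\<mu>. C.kernel (F \<mu>)"] conjI ballI allI impI)
    fix v assume "v \<in> V"
    then show "\<exists>w. (\<forall>\<mu>\<in>M. w \<mu> \<in> C.kernel (F \<mu>)) \<and> v = (\<Sum>\<mu>\<in>M. w \<mu>)"
      using E_in E_sum by (intro exI[of _ "\<lambda>\<mu>. C.peval (E \<mu>) v"]) auto
  qed (use M rc unique in \<open>auto simp: C.kernel_def\<close>)
qed

lemma sl2_hom_diff:
  assumes A: "sl2_module s A Lm Lz Lp" and f: "sl2_hom s A Lm Lz Lp t B Km Kz Kp f"
    and "y \<in> A" "z \<in> A"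
  shows "f (y - z) = f y - f z"
proof -
  interpret sl2_mod s A Lm Lz Lp by (rule sl2_mod.intro[OF A])
  have "f y = f ((y - z) + z)" by simp
  also have "\<dots> = f (y - z) + f z"
    using f assms(3,4) V_closed(5) unfolding sl2_hom_def by blast
  finally show ?thesis by (simp add: eq_diff_eq)
qed

lemma sl2_hom_casimir:
  assumes A: "sl2_module s A Lm Lz Lp" and f: "sl2_hom s A Lm Lz Lp t B Km Kz Kp f" and x: "x \<in> A"
  shows "f (casimir Lm Lz Lp x) = casimir Km Kz Kp (f x)"
proof -
  interpret sl2_mod s A Lm Lz Lp by (rule sl2_mod.intro[OF A])
  show ?thesis
    using f x
    by (simp add: casimir_def sl2_hom_diff[OF A f] V_closed Lm_lin Lz_lin Lp_lin sl2_hom_def)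
qed

lemma sl2_hom_orthogonal:
  fixes s :: "complex \<Rightarrow> 'a::ab_group_add \<Rightarrow> 'a" and t :: "complex \<Rightarrow> 'b::ab_group_add \<Rightarrow> 'b"
  assumes A: "in_RC_gen s A Lm Lz Lp \<mu>" and B: "in_RC_gen t B Km Kz Kp \<nu>" and "\<mu> \<noteq> \<nu>"
    and f: "sl2_hom s A Lm Lz Lp t B Km Kz Kp f" and x: "x \<in> A"
  shows "f x = 0"
proof -
  interpret a: sl2_mod s A Lm Lz Lp
    using A by unfold_locales (simp add: in_RC_gen_def rational_module_def)
  interpret b: sl2_mod t B Km Kz Kp
    using B by unfold_locales (simp add: in_RC_gen_def rational_module_def)
  define g where "g = (\<lambda>w. a.Cas w - s \<mu> w)"
  define h where "h = (\<lambda>w. b.Cas w - t \<mu> w)"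
  obtain n where n: "\<forall>v\<in>A. (g ^^ n) v = 0"
    using A unfolding g_def by (auto simp: in_RC_gen_def gen_casimir_level_def)
  obtain k where k: "\<forall>v\<in>B. ((\<lambda>w. b.Cas w - t \<nu> w) ^^ k) v = 0"
    using B by (auto simp: in_RC_gen_def gen_casimir_level_def)
  have f_in: "y \<in> A \<Longrightarrow> f y \<in> B" for y
    using f by (simp add: sl2_hom_def)
  have f_diff: "f (y - z) = f y - f z" if "y \<in> A" "z \<in> A" for y z
    using sl2_hom_diff[OF a.sl2 f that] .
  have g_in: "g y \<in> A" and f_g: "f (g y) = h (f y)" if "y \<in> A" for y
    using that f f_in by (simp_all add: g_def h_def a.V_closed a.Cas_lin f_diff sl2_hom_def
      sl2_hom_casimir[OF a.sl2 f])
  have iterate: "(g ^^ j) y \<in> A \<and> f ((g ^^ j) y) = (h ^^ j) (f y)" if "y \<in> A" for j y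
    using that by (induction j) (simp_all add: g_in f_g)
  have "(h ^^ n) (f x) = f ((g ^^ n) x)" using iterate[OF x] by simp
  also have "\<dots> = f 0" using n x by simp
  also have "f 0 = 0" using f_diff[OF a.V_closed(1) a.V_closed(1)] by simp
  finally have "f x \<in> b.C.kernel ([:-\<mu>, 1:] ^ n)"
    using f_in[OF x] by (simp add: b.C.kernel_def h_def b.funpow_casimir_shift)
  moreover have "f x \<in> b.C.kernel ([:-\<nu>, 1:] ^ k)"
    using f_in[OF x] k by (simp add: b.C.kernel_def b.funpow_casimir_shift)
  ultimately show ?thesis
    by (rule b.C.coprime_kernels_disjoint[OF coprime_linear_power[OF \<open>\<mu> \<noteq> \<nu>\<close>]])
qed

lemma in_RC_imp_in_RC_gen: "in_RC s V Lm Lz Lp \<mu> \<Longrightarrow> in_RC_gen s V Lm Lz Lp \<mu>"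
  unfolding in_RC_def in_RC_gen_def casimir_level_def gen_casimir_level_def
  by (auto intro: exI[of _ "1::nat"])

theorem theorem6p8:
  shows
    \<comment> \<open>every rational module is a finite direct sum of generalized Casimir submodules
        of pairwise distinct levels\<close>
    "(\<forall>(s :: complex \<Rightarrow> 'v::ab_group_add \<Rightarrow> 'v) V Lm Lz Lp.
        rational_module s V Lm Lz Lp \<longrightarrow>
        (\<exists>(M :: complex set) (W :: complex \<Rightarrow> 'v set). finite M \<and>
           (\<forall>\<mu>\<in>M. W \<mu> \<subseteq> V \<and> in_RC_gen s (W \<mu>) Lm Lz Lp \<mu>) \<and>
           (\<forall>v\<in>V. \<exists>w. (\<forall>\<mu>\<in>M. w \<mu> \<in> W \<mu>) \<and> v = (\<Sum>\<mu>\<in>M. w \<mu>)) \<and>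
           (\<forall>w w'. (\<forall>\<mu>\<in>M. w \<mu> \<in> W \<mu> \<and> w' \<mu> \<in> W \<mu>) \<and>
                   (\<Sum>\<mu>\<in>M. w \<mu>) = (\<Sum>\<mu>\<in>M. w' \<mu>) \<longrightarrow> (\<forall>\<mu>\<in>M. w \<mu> = w' \<mu>))))
     \<and>
    \<comment> \<open>Hom-orthogonality\<close>
    (\<forall>(s :: complex \<Rightarrow> 'a::ab_group_add \<Rightarrow> 'a) A Lm Lz Lp
       (t :: complex \<Rightarrow> 'b::ab_group_add \<Rightarrow> 'b) B Km Kz Kp \<mu> \<nu> f.
        in_RC_gen s A Lm Lz Lp \<mu> \<and> in_RC_gen t B Km Kz Kp \<nu> \<and> \<mu> \<noteq> \<nu> \<and>
        sl2_hom s A Lm Lz Lp t B Km Kz Kp f \<longrightarrow> (\<forall>x\<in>A. f x = 0))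
     \<and>
    \<comment> \<open>compatibility: RC_mu is contained in RC^bullet_mu\<close>
    (\<forall>(s :: complex \<Rightarrow> 'v \<Rightarrow> 'v) V Lm Lz Lp \<mu>.
        in_RC s V Lm Lz Lp \<mu> \<longrightarrow> in_RC_gen s V Lm Lz Lp \<mu>)"
  by (intro conjI allI impI ballI rational_module_decomposition)
    (auto intro: sl2_hom_orthogonal in_RC_imp_in_RC_gen)

end
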